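(* Let $A$ be an $N\times N$ $\{0,1\}$-matrix with no zero row and no zero column, and let $\tau_+,\tau_-:\mathcal{V}_A\to\Omega_A$ satisfy the cylinder condition. For $i=1,\dots,N$ put $\mathfrak{s}_i:=\mathfrak{s}_{i,\tau_+}\oplus\mathfrak{s}_{i,\tau_-}$ on $\ell^2(\mathcal{V}_A,\mathbb{C}^2)$. Then: (1) $\mathfrak{s}_i$ and $\mathfrak{s}_i^*$ preserve $C_c(\mathcal{V}_A,\mathbb{C}^2)$; (2) for each $s\in(0,1]$, $\mathfrak{s}_i$ and $\mathfrak{s}_i^*$ have bounded commutators with $D_{\mathcal{V},s}$; (3) there is a sequence $(f_k)\subseteq C_c(\mathcal{V}_A,\mathbb{C}^2)$ with $\|f_k\|=1$ and $\|[D^{BP}_{\mathcal{V}},\mathfrak{s}_i]f_k\|\to\infty$.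
   Context: $\mathcal{V}_A$: admissible finite words ($A_{\mu_j\mu_{j+1}}=1$) including the empty word $\circ$; $\Omega_A$: infinite admissible sequences; $C_\mu$: cylinder set of sequences starting with $\mu$. $\mathfrak t:\mathcal{V}_A\to\Omega_A$ satisfies the cylinder condition if $\mathfrak t(\mu)\in C_\mu$ for all $\mu$. $\pi_{\mathfrak t}(f)\delta_\mu=f(\mathfrak t(\mu))\delta_\mu$ for $f\in C(\Omega_A)$. $\sigma_{\mathcal V}(\mu_1\mu_2\cdots\mu_k)=\mu_2\cdots\mu_k$; $V_\sigma\in\mathbb{B}(\ell^2(\mathcal{V}_A))$ is $(V_\sigma f)(v)=f(\sigma_{\mathcal V}(v))$ for $v\ne\circ$ and $(V_\sigma f)(\circ)=0$; $\mathfrak{s}_{i,\mathfrak t}:=\pi_{\mathfrak t}(\chi_{C_i})V_\sigma$. On $\ell^2(\mathcal{V}_A,\mathbb{C}^2)=\ell^2(\mathcal{V}_A)\oplus\ell^2(\mathcal{V}_A)$: $D_{\mathcal{V},s}(\phi_+,\phi_-)(\mu)=|\mu|^s(\phi_-(\mu),\phi_+(\mu))$ and $D^{BP}_{\mathcal V}(\phi_+,\phi_-)(\mu)=e^{|\mu|}(\phi_-(\mu),\phi_+(\mu))$, self-adjoint closures from $C_c(\mathcal{V}_A,\mathbb{C}^2)$. *)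

theory Defs
  imports "HOL-Analysis.Analysis"
begin

text \<open>Alphabet: letters 1..N; the N x N {0,1}-matrix A is a function nat => nat => nat
  (only entries with indices in 1..N matter). Finite words are lists, the empty word is [].\<close>

definition adm_words :: "nat \<Rightarrow> (nat \<Rightarrow> nat \<Rightarrow> nat) \<Rightarrow> nat list set" where
  "adm_words N A = {\<mu>. set \<mu> \<subseteq> {1..N} \<and>
      (\<forall>j. Suc j < length \<mu> \<longrightarrow> A (\<mu> ! j) (\<mu> ! Suc j) = 1)}"

definition adm_seqs :: "nat \<Rightarrow> (nat \<Rightarrow> nat \<Rightarrow> nat) \<Rightarrow> (nat \<Rightarrow> nat) set" where
  "adm_seqs N A = {x. (\<forall>k. x k \<in> {1..N}) \<and> (\<forall>k. A (x k) (x (Suc k)) = 1)}"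

definition cyl :: "nat \<Rightarrow> (nat \<Rightarrow> nat \<Rightarrow> nat) \<Rightarrow> nat list \<Rightarrow> (nat \<Rightarrow> nat) set" where
  "cyl N A \<mu> = {x \<in> adm_seqs N A. \<forall>j<length \<mu>. x j = \<mu> ! j}"

definition cylinder_condition ::
  "nat \<Rightarrow> (nat \<Rightarrow> nat \<Rightarrow> nat) \<Rightarrow> (nat list \<Rightarrow> nat \<Rightarrow> nat) \<Rightarrow> bool" where
  "cylinder_condition N A t \<longleftrightarrow> (\<forall>\<mu>\<in>adm_words N A. t \<mu> \<in> cyl N A \<mu>)"

text \<open>Operators on l^2(V_A): functions nat list => complex vanishing off V_A.\<close>

definition V_sigma :: "nat \<Rightarrow> (nat \<Rightarrow> nat \<Rightarrow> nat) \<Rightarrow> (nat list \<Rightarrow> complex) \<Rightarrow> nat list \<Rightarrow> complex" where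
  "V_sigma N A f v = (if v \<in> adm_words N A \<and> v \<noteq> [] then f (tl v) else 0)"

definition pi_t :: "(nat list \<Rightarrow> nat \<Rightarrow> nat) \<Rightarrow> ((nat \<Rightarrow> nat) \<Rightarrow> complex)
    \<Rightarrow> (nat list \<Rightarrow> complex) \<Rightarrow> nat list \<Rightarrow> complex" where
  "pi_t t g \<phi> \<mu> = g (t \<mu>) * \<phi> \<mu>"

definition s_op :: "nat \<Rightarrow> (nat \<Rightarrow> nat \<Rightarrow> nat) \<Rightarrow> nat \<Rightarrow> (nat list \<Rightarrow> nat \<Rightarrow> nat)
    \<Rightarrow> (nat list \<Rightarrow> complex) \<Rightarrow> nat list \<Rightarrow> complex" where
  "s_op N A i t \<phi> = pi_t t (indicator (cyl N A [i])) (V_sigma N A \<phi>)"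

text \<open>Vectors of l^2(V_A, C^2) are functions nat list => complex * complex
  (first component phi_+, second phi_-).\<close>

definition s_sum :: "nat \<Rightarrow> (nat \<Rightarrow> nat \<Rightarrow> nat) \<Rightarrow> nat \<Rightarrow> (nat list \<Rightarrow> nat \<Rightarrow> nat)
    \<Rightarrow> (nat list \<Rightarrow> nat \<Rightarrow> nat) \<Rightarrow> (nat list \<Rightarrow> complex \<times> complex) \<Rightarrow> nat list \<Rightarrow> complex \<times> complex" where
  "s_sum N A i tp tm \<Phi> v = (s_op N A i tp (fst \<circ> \<Phi>) v, s_op N A i tm (snd \<circ> \<Phi>) v)"

definition l2V :: "nat \<Rightarrow> (nat \<Rightarrow> nat \<Rightarrow> nat) \<Rightarrow> (nat list \<Rightarrow> complex \<times> complex) set" where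
  "l2V N A = {\<Phi>. (\<forall>v. v \<notin> adm_words N A \<longrightarrow> \<Phi> v = 0) \<and> (\<lambda>v. (norm (\<Phi> v))^2) summable_on UNIV}"

definition CcV :: "nat \<Rightarrow> (nat \<Rightarrow> nat \<Rightarrow> nat) \<Rightarrow> (nat list \<Rightarrow> complex \<times> complex) set" where
  "CcV N A = {\<Phi>. (\<forall>v. v \<notin> adm_words N A \<longrightarrow> \<Phi> v = 0) \<and> finite {v. \<Phi> v \<noteq> 0}}"

definition l2norm :: "(nat list \<Rightarrow> complex \<times> complex) \<Rightarrow> real" where
  "l2norm \<Phi> = sqrt (\<Sum>\<^sub>\<infinity>v. (norm (\<Phi> v))^2)"

definition inner2 :: "(nat list \<Rightarrow> complex \<times> complex) \<Rightarrow> (nat list \<Rightarrow> complex \<times> complex) \<Rightarrow> complex" where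
  "inner2 \<Phi> \<Psi> = (\<Sum>\<^sub>\<infinity>v. cnj (fst (\<Phi> v)) * fst (\<Psi> v) + cnj (snd (\<Phi> v)) * snd (\<Psi> v))"

definition adjointV :: "nat \<Rightarrow> (nat \<Rightarrow> nat \<Rightarrow> nat)
    \<Rightarrow> ((nat list \<Rightarrow> complex \<times> complex) \<Rightarrow> (nat list \<Rightarrow> complex \<times> complex))
    \<Rightarrow> (nat list \<Rightarrow> complex \<times> complex) \<Rightarrow> (nat list \<Rightarrow> complex \<times> complex)" where
  "adjointV N A T \<Psi> = (if \<Psi> \<in> l2V N A
      then (THE H. H \<in> l2V N A \<and> (\<forall>\<Phi>\<in>l2V N A. inner2 (T \<Phi>) \<Psi> = inner2 \<Phi> H))
      else (\<lambda>_. 0))"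

text \<open>The Dirac operators, given by their action (on C_c, a core).\<close>

definition D_Vs :: "real \<Rightarrow> (nat list \<Rightarrow> complex \<times> complex) \<Rightarrow> nat list \<Rightarrow> complex \<times> complex" where
  "D_Vs s \<Phi> \<mu> = (complex_of_real (real (length \<mu>) powr s) * snd (\<Phi> \<mu>),
                  complex_of_real (real (length \<mu>) powr s) * fst (\<Phi> \<mu>))"

definition D_BP :: "(nat list \<Rightarrow> complex \<times> complex) \<Rightarrow> nat list \<Rightarrow> complex \<times> complex" where
  "D_BP \<Phi> \<mu> = (complex_of_real (exp (real (length \<mu>))) * snd (\<Phi> \<mu>),
                complex_of_real (exp (real (length \<mu>))) * fst (\<Phi> \<mu>))"

text \<open>[D,T] is bounded: bounded on the core C_c (where it is defined since T preserves C_c).\<close>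

definition bdd_comm :: "nat \<Rightarrow> (nat \<Rightarrow> nat \<Rightarrow> nat)
    \<Rightarrow> ((nat list \<Rightarrow> complex \<times> complex) \<Rightarrow> (nat list \<Rightarrow> complex \<times> complex))
    \<Rightarrow> ((nat list \<Rightarrow> complex \<times> complex) \<Rightarrow> (nat list \<Rightarrow> complex \<times> complex)) \<Rightarrow> bool" where
  "bdd_comm N A D T \<longleftrightarrow> (\<exists>C. \<forall>\<Phi>\<in>CcV N A. l2norm (D (T \<Phi>) - T (D \<Phi>)) \<le> C * l2norm \<Phi>)"

end

theory Submission
  imports Defs "HOL-Real_Asymp.Real_Asymp"
begin

(* The cylinder condition makes chi_{C_i}(tau(mu)) test only the first letter of mu, so both
   summands of s_i are one and the same creation operator  phi |-> [mu = i nu admissible] phi(nu),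
   whose adjoint is the annihilation operator  psi |-> psi(i nu);  both preserve finite supports.
   A Dirac operator mu |-> g(|mu|) (times the flip of C^2) commutes with them up to the diagonal
   operator with entries g(n+1) - g(n), because they change word lengths by one.  For g(n) = n^s
   with s <= 1 these increments are at most 1; for g(n) = e^n they are unbounded, and unit vectors
   on admissible words of every length, which exist because A has no zero row, make the commutator
   unbounded.  The 0/1 entries and the absence of zero columns are not needed. *)

lemma adm_words_ConsD: "a # \<nu> \<in> adm_words N A \<Longrightarrow> \<nu> \<in> adm_words N A"
proof (unfold adm_words_def, safe)
  fix j
  assume "\<forall>j. Suc j < length (a # \<nu>) \<longrightarrow> A ((a # \<nu>) ! j) ((a # \<nu>) ! Suc j) = 1"
    and "Suc j < length \<nu>"
  then show "A (\<nu> ! j) (\<nu> ! Suc j) = 1" by (metis Suc_less_eq length_Cons nth_Cons_Suc)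
qed auto

lemma adm_words_singleton: "[a] \<in> adm_words N A \<longleftrightarrow> a \<in> {1..N}"
  by (simp add: adm_words_def)

lemma adm_words_Cons_Cons:
  "a # b # \<nu> \<in> adm_words N A \<longleftrightarrow> a \<in> {1..N} \<and> A a b = 1 \<and> b # \<nu> \<in> adm_words N A"
  by (auto simp: adm_words_def less_Suc_eq_0_disj)

lemma exists_adm_word_Cons:
  assumes "\<forall>a\<in>{1..N}. \<exists>b\<in>{1..N}. A a b = 1" and "i \<in> {1..N}"
  shows "\<exists>\<nu>. length \<nu> = k \<and> i # \<nu> \<in> adm_words N A"
  using assms(2)
proof (induction k arbitrary: i)
  case 0
  then show ?case by (simp add: adm_words_singleton)
next
  case (Suc k)
  obtain b where b: "b \<in> {1..N}" "A i b = 1"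
    using assms(1) Suc.prems by blast
  obtain \<nu> where "length \<nu> = k" "b # \<nu> \<in> adm_words N A"
    using Suc.IH[OF b(1)] by blast
  then show ?case
    using Suc.prems b by (intro exI[of _ "b # \<nu>"]) (simp add: adm_words_Cons_Cons)
qed

definition delta :: "'a \<Rightarrow> 'b::zero \<Rightarrow> 'a \<Rightarrow> 'b" where
  "delta v p = (\<lambda>w. if w = v then p else 0)"

lemma summable_on_finite_support:
  fixes f :: "'a \<Rightarrow> 'b::{comm_monoid_add,topological_space}"
  assumes "finite {x. f x \<noteq> 0}"
  shows "f summable_on UNIV"
  using summable_on_finite[OF assms, of f] by (rule summable_on_cong_neutral[THEN iffD1, rotated -1]) auto

lemma infsum_reindex_Cons:
  fixes h :: "'a list \<Rightarrow> 'b::{comm_monoid_add,t2_space}"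
  assumes "\<And>v. v \<notin> range (Cons a) \<Longrightarrow> h v = 0"
  shows "infsum h UNIV = infsum (\<lambda>\<nu>. h (a # \<nu>)) UNIV"
proof -
  have "infsum h UNIV = infsum h (range (Cons a))"
    by (rule infsum_cong_neutral) (use assms in auto)
  also have "\<dots> = infsum (\<lambda>\<nu>. h (a # \<nu>)) UNIV"
    by (simp add: infsum_reindex o_def)
  finally show ?thesis .
qed

lemma infsum_delta: "infsum (delta v c) UNIV = (c::'b::{comm_monoid_add,t2_space})"
proof -
  have "infsum (delta v c) UNIV = infsum (delta v c) {v}"
    by (rule infsum_cong_neutral) (auto simp: delta_def)
  then show ?thesis by (simp add: delta_def)
qed

lemma CcV_imp_l2V: "\<Phi> \<in> CcV N A \<Longrightarrow> \<Phi> \<in> l2V N A"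
  unfolding CcV_def l2V_def
  by (auto intro!: summable_on_finite_support elim!: finite_subset[rotated])

lemma l2norm_delta: "l2norm (delta v p) = norm p"
proof -
  have "(\<lambda>w. (norm (delta v p w))\<^sup>2) = delta v ((norm p)\<^sup>2)"
    by (auto simp: delta_def)
  then show ?thesis by (simp add: l2norm_def infsum_delta)
qed

lemma l2norm_uminus: "l2norm (- \<Phi>) = l2norm \<Phi>"
  by (simp add: l2norm_def)

lemma inner2_delta: "inner2 (delta v p) \<Psi> = cnj (fst p) * fst (\<Psi> v) + cnj (snd p) * snd (\<Psi> v)"
proof -
  have "(\<lambda>w. cnj (fst (delta v p w)) * fst (\<Psi> w) + cnj (snd (delta v p w)) * snd (\<Psi> w))
      = delta v (cnj (fst p) * fst (\<Psi> v) + cnj (snd p) * snd (\<Psi> v))"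
    by (auto simp: delta_def)
  then show ?thesis by (simp add: inner2_def infsum_delta)
qed

lemma l2V_eqI:
  assumes "\<Phi> \<in> l2V N A" "\<Psi> \<in> l2V N A"
    and "\<And>v p. v \<in> adm_words N A \<Longrightarrow> inner2 (delta v p) \<Phi> = inner2 (delta v p) \<Psi>"
  shows "\<Phi> = \<Psi>"
proof
  fix v
  show "\<Phi> v = \<Psi> v"
  proof (cases "v \<in> adm_words N A")
    case True
    from assms(3)[OF True, of "(1, 0)"] assms(3)[OF True, of "(0, 1)"] show ?thesis
      by (simp add: inner2_delta prod_eq_iff)
  qed (use assms(1,2) in \<open>auto simp: l2V_def\<close>)
qed

lemma l2norm_mono:
  assumes "\<And>v. norm (\<Phi> v) \<le> norm (\<Psi> v)" and "finite {v. \<Psi> v \<noteq> 0}"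
  shows "l2norm \<Phi> \<le> l2norm \<Psi>"
proof -
  have "\<Psi> v \<noteq> 0" if "\<Phi> v \<noteq> 0" for v
    using assms(1)[of v] that by (metis norm_eq_zero norm_ge_zero order_antisym)
  then have "{v. (norm (\<Phi> v))\<^sup>2 \<noteq> 0} \<subseteq> {v. \<Psi> v \<noteq> 0}"
    by auto
  then have "(\<lambda>v. (norm (\<Phi> v))\<^sup>2) summable_on UNIV"
    using assms(2) by (intro summable_on_finite_support) (rule finite_subset)
  moreover have "(\<lambda>v. (norm (\<Psi> v))\<^sup>2) summable_on UNIV"
    using assms(2) by (intro summable_on_finite_support) simp
  ultimately have "(\<Sum>\<^sub>\<infinity>v. (norm (\<Phi> v))\<^sup>2) \<le> (\<Sum>\<^sub>\<infinity>v. (norm (\<Psi> v))\<^sup>2)"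
    by (rule infsum_mono) (simp add: assms(1) power_mono)
  then show ?thesis
    unfolding l2norm_def by (rule real_sqrt_le_mono)
qed

lemma l2norm_scaled_mono:
  assumes "\<And>v. norm (\<Phi> v) \<le> C * norm (\<Psi> v)" and "0 \<le> C" and "finite {v. \<Psi> v \<noteq> 0}"
  shows "l2norm \<Phi> \<le> C * l2norm \<Psi>"
proof -
  have "l2norm \<Phi> \<le> l2norm (\<lambda>v. C *\<^sub>R \<Psi> v)"
    using assms by (intro l2norm_mono) (auto elim: finite_subset[rotated])
  also have "\<dots> = C * l2norm \<Psi>"
    using assms(2,3)
    by (simp add: l2norm_def power_mult_distrib infsum_cmult_right summable_on_finite_support
        real_sqrt_mult)
  finally show ?thesis .
qed

lemma l2norm_Cons_reindex:
  assumes "\<And>v. v \<notin> range (Cons a) \<Longrightarrow> \<Phi> v = 0"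
  shows "l2norm \<Phi> = l2norm (\<lambda>\<nu>. \<Phi> (a # \<nu>))"
  unfolding l2norm_def using assms by (subst infsum_reindex_Cons[of a]) auto

lemma l2norm_Cons_restrict_le:
  assumes "finite {v. \<Phi> v \<noteq> 0}"
  shows "l2norm (\<lambda>\<nu>. \<Phi> (a # \<nu>)) \<le> l2norm \<Phi>"
proof -
  have "l2norm (\<lambda>\<nu>. \<Phi> (a # \<nu>)) = l2norm (\<lambda>v. if v \<in> range (Cons a) then \<Phi> v else 0)"
    by (subst l2norm_Cons_reindex[of a]) auto
  also have "\<dots> \<le> l2norm \<Phi>"
    using assms by (intro l2norm_mono) auto
  finally show ?thesis .
qed

subsection \<open>Creation and annihilation operators\<close>

definition creation :: "nat \<Rightarrow> (nat \<Rightarrow> nat \<Rightarrow> nat) \<Rightarrow> nat \<Rightarrow> (nat list \<Rightarrow> 'a::zero) \<Rightarrow> nat list \<Rightarrow> 'a" where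
  "creation N A i \<Phi> \<mu> = (if \<mu> \<in> adm_words N A \<and> \<mu> \<noteq> [] \<and> hd \<mu> = i then \<Phi> (tl \<mu>) else 0)"

definition annihilation :: "nat \<Rightarrow> (nat \<Rightarrow> nat \<Rightarrow> nat) \<Rightarrow> nat \<Rightarrow> (nat list \<Rightarrow> 'a::zero) \<Rightarrow> nat list \<Rightarrow> 'a" where
  "annihilation N A i \<Psi> \<nu> = (if i # \<nu> \<in> adm_words N A then \<Psi> (i # \<nu>) else 0)"

lemma creation_Nil [simp]: "creation N A i \<Phi> [] = 0"
  by (simp add: creation_def)

lemma creation_Cons [simp]:
  "creation N A i \<Phi> (a # \<nu>) = (if a = i \<and> a # \<nu> \<in> adm_words N A then \<Phi> \<nu> else 0)"
  by (auto simp: creation_def)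

lemma creation_eq_0_off_Cons: "\<mu> \<notin> range (Cons i) \<Longrightarrow> creation N A i \<Phi> \<mu> = 0"
  by (cases \<mu>) auto

lemma creation_delta: "i # \<nu> \<in> adm_words N A \<Longrightarrow> creation N A i (delta \<nu> p) = delta (i # \<nu>) p"
proof
  fix \<mu>
  assume "i # \<nu> \<in> adm_words N A"
  then show "creation N A i (delta \<nu> p) \<mu> = delta (i # \<nu>) p \<mu>"
    by (cases \<mu>) (auto simp: delta_def)
qed

lemma s_op_eq_creation:
  assumes "cylinder_condition N A t"
  shows "s_op N A i t \<phi> = creation N A i \<phi>"
proof
  fix \<mu>
  show "s_op N A i t \<phi> \<mu> = creation N A i \<phi> \<mu>"
  proof (cases "\<mu> \<in> adm_words N A \<and> \<mu> \<noteq> []")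
    case True
    then have "t \<mu> \<in> cyl N A \<mu>"
      using assms by (auto simp: cylinder_condition_def)
    then have "t \<mu> \<in> cyl N A [i] \<longleftrightarrow> hd \<mu> = i"
      using True by (auto simp: cyl_def hd_conv_nth)
    then show ?thesis
      using True by (simp add: s_op_def pi_t_def V_sigma_def creation_def indicator_def)
  qed (auto simp: s_op_def pi_t_def V_sigma_def creation_def)
qed

lemma s_sum_eq_creation:
  assumes "cylinder_condition N A tp" and "cylinder_condition N A tm"
  shows "s_sum N A i tp tm = creation N A i"
  by (intro ext) (simp add: s_sum_def s_op_eq_creation[OF assms(1)] s_op_eq_creation[OF assms(2)]
      creation_def zero_prod_def)

lemma creation_CcV: "\<Phi> \<in> CcV N A \<Longrightarrow> creation N A i \<Phi> \<in> CcV N A"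
proof -
  assume \<Phi>: "\<Phi> \<in> CcV N A"
  have "{\<mu>. creation N A i \<Phi> \<mu> \<noteq> 0} \<subseteq> Cons i ` {\<nu>. \<Phi> \<nu> \<noteq> 0}"
    by (auto simp: creation_def image_iff split: if_splits) (metis list.collapse)
  moreover have "finite (Cons i ` {\<nu>. \<Phi> \<nu> \<noteq> 0})"
    using \<Phi> by (simp add: CcV_def)
  ultimately have "finite {\<mu>. creation N A i \<Phi> \<mu> \<noteq> 0}"
    by (rule finite_subset)
  then show ?thesis
    by (simp add: CcV_def creation_def)
qed

lemma annihilation_CcV: "\<Psi> \<in> CcV N A \<Longrightarrow> annihilation N A i \<Psi> \<in> CcV N A"
proof -
  assume \<Psi>: "\<Psi> \<in> CcV N A"
  have "{\<nu>. annihilation N A i \<Psi> \<nu> \<noteq> 0} \<subseteq> Cons i -` {v. \<Psi> v \<noteq> 0}"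
    by (auto simp: annihilation_def split: if_splits)
  moreover have "finite (Cons i -` {v. \<Psi> v \<noteq> 0})"
    using \<Psi> by (intro finite_vimageI) (auto simp: CcV_def)
  ultimately show ?thesis
    by (auto simp: CcV_def annihilation_def dest: adm_words_ConsD intro: finite_subset)
qed

lemma inner2_creation: "inner2 (creation N A i \<Phi>) \<Psi> = inner2 \<Phi> (annihilation N A i \<Psi>)"
  unfolding inner2_def
  by (subst infsum_reindex_Cons[of i])
    (auto simp: creation_eq_0_off_Cons annihilation_def intro!: infsum_cong)

lemma adjointV_creation:
  assumes "\<Psi> \<in> CcV N A"
  shows "adjointV N A (creation N A i) \<Psi> = annihilation N A i \<Psi>"
proof -
  have ann: "annihilation N A i \<Psi> \<in> l2V N A"
    using assms by (intro CcV_imp_l2V annihilation_CcV)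
  have "H = annihilation N A i \<Psi>"
    if "H \<in> l2V N A" and "\<forall>\<Phi>\<in>l2V N A. inner2 (creation N A i \<Phi>) \<Psi> = inner2 \<Phi> H" for H
  proof (rule l2V_eqI[OF that(1) ann])
    fix v p assume "v \<in> adm_words N A"
    then have "delta v p \<in> l2V N A"
      by (intro CcV_imp_l2V) (auto simp: CcV_def delta_def)
    with that(2) have "inner2 (creation N A i (delta v p)) \<Psi> = inner2 (delta v p) H" ..
    then show "inner2 (delta v p) H = inner2 (delta v p) (annihilation N A i \<Psi>)"
      by (simp only: inner2_creation)
  qed
  moreover have "\<forall>\<Phi>\<in>l2V N A. inner2 (creation N A i \<Phi>) \<Psi> = inner2 \<Phi> (annihilation N A i \<Psi>)"
    by (simp only: inner2_creation) blast
  ultimately have "(THE H. H \<in> l2V N A \<and> (\<forall>\<Phi>\<in>l2V N A. inner2 (creation N A i \<Phi>) \<Psi> = inner2 \<Phi> H))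
      = annihilation N A i \<Psi>"
    using ann by (intro the_equality) blast+
  then show ?thesis
    using CcV_imp_l2V[OF assms] by (simp add: adjointV_def)
qed

lemma l2norm_creation_le:
  assumes "finite {v. \<Phi> v \<noteq> 0}"
  shows "l2norm (creation N A i \<Phi>) \<le> l2norm \<Phi>"
proof -
  have "l2norm (creation N A i \<Phi>) = l2norm (\<lambda>\<nu>. creation N A i \<Phi> (i # \<nu>))"
    by (rule l2norm_Cons_reindex) (rule creation_eq_0_off_Cons)
  also have "\<dots> \<le> l2norm \<Phi>"
    using assms by (intro l2norm_mono) auto
  finally show ?thesis .
qed

lemma l2norm_annihilation_le:
  assumes "finite {v. \<Psi> v \<noteq> 0}"
  shows "l2norm (annihilation N A i \<Psi>) \<le> l2norm \<Psi>"
proof -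
  have "finite {\<nu>. \<Psi> (i # \<nu>) \<noteq> 0}"
    using finite_vimageI[OF assms, of "Cons i"] by (simp add: vimage_def)
  then have "l2norm (annihilation N A i \<Psi>) \<le> l2norm (\<lambda>\<nu>. \<Psi> (i # \<nu>))"
    by (intro l2norm_mono) (simp add: annihilation_def)
  also have "\<dots> \<le> l2norm \<Psi>"
    using assms by (rule l2norm_Cons_restrict_le)
  finally show ?thesis .
qed

subsection \<open>Dirac operators with a length function\<close>

definition dirac :: "(nat \<Rightarrow> real) \<Rightarrow> (nat list \<Rightarrow> complex \<times> complex) \<Rightarrow> nat list \<Rightarrow> complex \<times> complex" where
  "dirac g \<Phi> \<mu> = (complex_of_real (g (length \<mu>)) * snd (\<Phi> \<mu>), complex_of_real (g (length \<mu>)) * fst (\<Phi> \<mu>))"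

lemma D_Vs_eq_dirac: "D_Vs s = dirac (\<lambda>n. real n powr s)"
  by (intro ext) (simp add: D_Vs_def dirac_def)

lemma D_BP_eq_dirac: "D_BP = dirac (\<lambda>n. exp (real n))"
  by (intro ext) (simp add: D_BP_def dirac_def)

lemma norm_dirac: "norm (dirac g \<Phi> \<mu>) = \<bar>g (length \<mu>)\<bar> * norm (\<Phi> \<mu>)"
proof -
  have "norm (dirac g \<Phi> \<mu>) = sqrt ((g (length \<mu>))\<^sup>2 * ((norm (snd (\<Phi> \<mu>)))\<^sup>2 + (norm (fst (\<Phi> \<mu>)))\<^sup>2))"
    by (simp add: dirac_def norm_Pair norm_mult power_mult_distrib distrib_left)
  also have "\<dots> = \<bar>g (length \<mu>)\<bar> * norm (\<Phi> \<mu>)"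
    by (simp add: real_sqrt_mult norm_Pair[of "fst (\<Phi> \<mu>)" "snd (\<Phi> \<mu>)", symmetric] add.commute)
  finally show ?thesis .
qed

lemma dirac_eq_0_iff: "dirac g \<Phi> \<mu> = 0 \<longleftrightarrow> g (length \<mu>) = 0 \<or> \<Phi> \<mu> = 0"
  by (metis norm_dirac norm_eq_zero mult_eq_0_iff abs_eq_0)

lemma finite_support_dirac: "finite {v. \<Phi> v \<noteq> 0} \<Longrightarrow> finite {v. dirac g \<Phi> v \<noteq> 0}"
  by (auto simp: dirac_eq_0_iff elim!: finite_subset[rotated])

lemma dirac_CcV: "\<Phi> \<in> CcV N A \<Longrightarrow> dirac g \<Phi> \<in> CcV N A"
  unfolding CcV_def by (auto simp: dirac_eq_0_iff elim!: finite_subset[rotated])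

lemma l2norm_dirac_le:
  assumes "\<And>n. \<bar>h n\<bar> \<le> C" and "finite {v. \<Phi> v \<noteq> 0}"
  shows "l2norm (dirac h \<Phi>) \<le> C * l2norm \<Phi>"
proof (rule l2norm_scaled_mono[OF _ _ assms(2)])
  show "norm (dirac h \<Phi> v) \<le> C * norm (\<Phi> v)" for v
    unfolding norm_dirac using assms(1) by (rule mult_right_mono) simp
  show "0 \<le> C"
    using assms(1)[of 0] by simp
qed

lemma dirac_creation_commutator:
  "dirac g (creation N A i \<Phi>) - creation N A i (dirac g \<Phi>)
     = creation N A i (dirac (\<lambda>n. g (Suc n) - g n) \<Phi>)"
proof
  fix \<mu>
  show "(dirac g (creation N A i \<Phi>) - creation N A i (dirac g \<Phi>)) \<mu>
      = creation N A i (dirac (\<lambda>n. g (Suc n) - g n) \<Phi>) \<mu>"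
    by (cases \<mu>) (auto simp: dirac_def algebra_simps zero_prod_def)
qed

lemma dirac_annihilation_commutator:
  "dirac g (annihilation N A i \<Psi>) - annihilation N A i (dirac g \<Psi>)
     = - dirac (\<lambda>n. g (Suc n) - g n) (annihilation N A i \<Psi>)"
  by (intro ext) (auto simp: dirac_def annihilation_def algebra_simps zero_prod_def)

lemma dirac_delta: "dirac g (delta v p) = delta v (dirac g (\<lambda>_. p) v)"
  by (intro ext) (simp add: dirac_def delta_def zero_prod_def)

lemma powr_add_one_le:
  fixes s x :: real
  assumes "0 < s" "s \<le> 1" "0 \<le> x"
  shows "(x + 1) powr s \<le> x powr s + 1"
proof (cases "x = 0")
  case False
  define y where "y = x + 1"
  have y: "0 < y" and x: "0 < x"
    using False assms by (auto simp: y_def)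
  have "x / y \<le> x powr s / y powr s" and "1 / y \<le> 1 / y powr s"
    using powr_mono'[of s 1 "x / y"] powr_mono'[of s 1 "1 / y"] assms x y
    by (simp_all add: y_def powr_divide)
  then have "x / y + 1 / y \<le> (x powr s + 1) / y powr s"
    by (simp add: add_divide_distrib)
  moreover have "x / y + 1 / y = 1"
    using y by (simp add: y_def field_simps)
  ultimately show ?thesis
    using y by (simp add: y_def pos_le_divide_eq)
qed simp

lemma powr_Suc_diff_le:
  assumes "0 < s" "s \<le> 1"
  shows "\<bar>real (Suc n) powr s - real n powr s\<bar> \<le> 1"
  using powr_add_one_le[OF assms, of "real n"] powr_mono2[of s "real n" "real n + 1"] assms
  by (simp add: add.commute)

lemma exp_Suc_diff_tendsto: "filterlim (\<lambda>n. \<bar>exp (real (Suc n)) - exp (real n)\<bar>) at_top sequentially"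
  by real_asymp

lemma bdd_comm_dirac_creation:
  assumes "\<And>n. \<bar>g (Suc n) - g n\<bar> \<le> C"
  shows "bdd_comm N A (dirac g) (creation N A i)"
  unfolding bdd_comm_def
proof (intro exI ballI)
  fix \<Phi> assume "\<Phi> \<in> CcV N A"
  then have fin: "finite {v. \<Phi> v \<noteq> 0}"
    by (simp add: CcV_def)
  have "l2norm (dirac g (creation N A i \<Phi>) - creation N A i (dirac g \<Phi>))
      = l2norm (creation N A i (dirac (\<lambda>n. g (Suc n) - g n) \<Phi>))"
    by (simp only: dirac_creation_commutator)
  also have "\<dots> \<le> l2norm (dirac (\<lambda>n. g (Suc n) - g n) \<Phi>)"
    using fin by (intro l2norm_creation_le finite_support_dirac)
  also have "\<dots> \<le> C * l2norm \<Phi>"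
    using assms fin by (rule l2norm_dirac_le)
  finally show "l2norm (dirac g (creation N A i \<Phi>) - creation N A i (dirac g \<Phi>)) \<le> C * l2norm \<Phi>" .
qed

lemma bdd_comm_dirac_adjoint_creation:
  assumes "\<And>n. \<bar>g (Suc n) - g n\<bar> \<le> C"
  shows "bdd_comm N A (dirac g) (adjointV N A (creation N A i))"
  unfolding bdd_comm_def
proof (intro exI ballI)
  fix \<Phi> assume \<Phi>: "\<Phi> \<in> CcV N A"
  then have fin: "finite {v. \<Phi> v \<noteq> 0}"
    by (simp add: CcV_def)
  have fin_ann: "finite {v. annihilation N A i \<Phi> v \<noteq> 0}"
    using annihilation_CcV[OF \<Phi>] by (simp add: CcV_def)
  have "0 \<le> C"
    using assms[of 0] by simp
  have "l2norm (dirac g (adjointV N A (creation N A i) \<Phi>) - adjointV N A (creation N A i) (dirac g \<Phi>))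
      = l2norm (dirac g (annihilation N A i \<Phi>) - annihilation N A i (dirac g \<Phi>))"
    using \<Phi> by (simp add: adjointV_creation dirac_CcV)
  also have "\<dots> = l2norm (dirac (\<lambda>n. g (Suc n) - g n) (annihilation N A i \<Phi>))"
    by (simp only: dirac_annihilation_commutator l2norm_uminus)
  also have "\<dots> \<le> C * l2norm (annihilation N A i \<Phi>)"
    using assms fin_ann by (rule l2norm_dirac_le)
  also have "\<dots> \<le> C * l2norm \<Phi>"
    using \<open>0 \<le> C\<close> fin by (intro mult_left_mono l2norm_annihilation_le)
  finally show "l2norm (dirac g (adjointV N A (creation N A i) \<Phi>)
      - adjointV N A (creation N A i) (dirac g \<Phi>)) \<le> C * l2norm \<Phi>" .
qed

lemma unbounded_commutator_dirac_creation:
  assumes "\<forall>a\<in>{1..N}. \<exists>b\<in>{1..N}. A a b = 1" and "i \<in> {1..N}"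
    and "filterlim (\<lambda>n. \<bar>g (Suc n) - g n\<bar>) at_top sequentially"
  shows "\<exists>f. (\<forall>k. f k \<in> CcV N A \<and> l2norm (f k) = 1)
    \<and> filterlim (\<lambda>k. l2norm (dirac g (creation N A i (f k)) - creation N A i (dirac g (f k))))
        at_top sequentially"
proof -
  obtain \<nu> where \<nu>: "\<And>k. length (\<nu> k) = k \<and> i # \<nu> k \<in> adm_words N A"
    using exists_adm_word_Cons[OF assms(1,2)] by metis
  define f :: "nat \<Rightarrow> nat list \<Rightarrow> complex \<times> complex" where "f k = delta (\<nu> k) (1, 0)" for k
  have "f k \<in> CcV N A" for k
    using \<nu>[of k] by (auto simp: f_def CcV_def delta_def dest: adm_words_ConsD)
  moreover have "l2norm (f k) = 1" for k
    by (simp add: f_def l2norm_delta)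
  moreover have "l2norm (dirac g (creation N A i (f k)) - creation N A i (dirac g (f k)))
      = \<bar>g (Suc k) - g k\<bar>" for k
    using \<nu>[of k] unfolding dirac_creation_commutator
    by (simp add: f_def dirac_delta creation_delta l2norm_delta norm_dirac)
  ultimately show ?thesis
    using assms(3) by (intro exI[of _ f]) simp
qed

theorem proposition4p18:
  fixes N :: nat and A :: "nat \<Rightarrow> nat \<Rightarrow> nat"
    and tp tm :: "nat list \<Rightarrow> nat \<Rightarrow> nat" and i :: nat
  assumes "\<forall>a\<in>{1..N}. \<forall>b\<in>{1..N}. A a b \<in> {0, 1}"
    and "\<forall>a\<in>{1..N}. \<exists>b\<in>{1..N}. A a b = 1"
    and "\<forall>b\<in>{1..N}. \<exists>a\<in>{1..N}. A a b = 1"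
    and "cylinder_condition N A tp" and "cylinder_condition N A tm"
    and "i \<in> {1..N}"
  shows "s_sum N A i tp tm ` CcV N A \<subseteq> CcV N A
       \<and> adjointV N A (s_sum N A i tp tm) ` CcV N A \<subseteq> CcV N A
       \<and> (\<forall>s. 0 < s \<and> s \<le> 1 \<longrightarrow>
            bdd_comm N A (D_Vs s) (s_sum N A i tp tm)
          \<and> bdd_comm N A (D_Vs s) (adjointV N A (s_sum N A i tp tm)))
       \<and> (\<exists>f :: nat \<Rightarrow> nat list \<Rightarrow> complex \<times> complex.
            (\<forall>k. f k \<in> CcV N A \<and> l2norm (f k) = 1)
          \<and> filterlim (\<lambda>k. l2norm (D_BP (s_sum N A i tp tm (f k)) - s_sum N A i tp tm (D_BP (f k))))
              at_top sequentially)"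
proof -
  have s_sum: "s_sum N A i tp tm = creation N A i"
    using assms(4,5) by (rule s_sum_eq_creation)
  have "creation N A i ` CcV N A \<subseteq> CcV N A"
    by (auto intro: creation_CcV)
  moreover have "adjointV N A (creation N A i) ` CcV N A \<subseteq> CcV N A"
    by (auto simp: adjointV_creation intro: annihilation_CcV)
  moreover have "bdd_comm N A (D_Vs s) (creation N A i)
      \<and> bdd_comm N A (D_Vs s) (adjointV N A (creation N A i))" if "0 < s" "s \<le> 1" for s
    unfolding D_Vs_eq_dirac using powr_Suc_diff_le[OF that]
    by (intro conjI bdd_comm_dirac_creation[where g = "\<lambda>n. real n powr s"]
        bdd_comm_dirac_adjoint_creation[where g = "\<lambda>n. real n powr s"])
  moreover have "\<exists>f :: nat \<Rightarrow> nat list \<Rightarrow> complex \<times> complex.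
      (\<forall>k. f k \<in> CcV N A \<and> l2norm (f k) = 1)
      \<and> filterlim (\<lambda>k. l2norm (D_BP (creation N A i (f k)) - creation N A i (D_BP (f k))))
          at_top sequentially"
    unfolding D_BP_eq_dirac using assms(2,6) exp_Suc_diff_tendsto
    by (rule unbounded_commutator_dirac_creation)
  ultimately show ?thesis
    unfolding s_sum by blast
qed

end
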